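(* Let $\mathcal{T}_1=(V,\mathsf{p}_1)$ and $\mathcal{T}_2=(V,\mathsf{p}_2)$ be directed forests such that $\mathcal{T}_1$ is thinner than $\mathcal{T}_2$. Then: (a) $\mathrm{Chi}^{\langle k\rangle}_{\mathcal{T}_1}(v)\subseteq\mathrm{Chi}^{\langle k\rangle}_{\mathcal{T}_2}(v)$ for all $v\in V$ and $k\in\mathbb{N}$; (b) $\mathrm{root}(\mathcal{T}_1)\supseteq\mathrm{root}(\mathcal{T}_2)$; (c) every tree in $\mathcal{T}_1$ is contained in some tree in $\mathcal{T}_2$; in particular, the number of trees in $\mathcal{T}_2$ is less than or equal to the number of trees in $\mathcal{T}_1$; (d) every tree in $\mathcal{T}_2$ contains exactly one tree of $\mathcal{T}_1$ if and only if $\mathcal{T}_1=\mathcal{T}_2$; in particular, a directed forest strictly thinner than a directed tree is never a directed tree.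
   Context: A directed forest is a pair $\mathcal{T}=(V,\mathsf{p})$ where $V$ is a nonempty set and $\mathsf{p}\colon V\to V$ satisfies: if $n\in\mathbb{N}$, $v\in V$ and $\mathsf{p}^n(v)=v$, then $\mathsf{p}(v)=v$. Roots: $\mathrm{root}(\mathcal{T})=\{v:\mathsf{p}(v)=v\}$. For $k\in\mathbb{N}$, the $k$-th children of $v$ are $\mathrm{Chi}^{\langle k\rangle}_{\mathcal{T}}(v)=\{u\in V:\mathsf{p}^k(u)=v\neq\mathsf{p}^{k-1}(u)\}$ (with $\mathsf{p}^0=\mathrm{id}_V$). The trees of $\mathcal{T}$ are the connected components of the graph on $V$ with edges $\{\mathsf{p}(u),u\}$ for $u\notin\mathrm{root}(\mathcal{T})$ (equivalently, classes of $u\sim w$ iff $\mathsf{p}^m(u)=\mathsf{p}^n(w)$ for some $m,n\ge0$); a directed tree is a directed forest with exactly one tree. $\mathcal{T}_1$ is thinner than $\mathcal{T}_2$ if $\mathsf{p}_1(v)\in\{v,\mathsf{p}_2(v)\}$ for all $v\in V$; "strictly thinner" means thinner and different. *)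

theory Defs
  imports Main
begin

text \<open>A directed forest on the vertex set V (a subset of a type) with parent map p.
  Only the values of p on V matter; p must map V into V. Here N = {1,2,...}.\<close>
definition directed_forest :: "'a set \<Rightarrow> ('a \<Rightarrow> 'a) \<Rightarrow> bool" where
  "directed_forest V p \<longleftrightarrow> V \<noteq> {} \<and> (\<forall>v\<in>V. p v \<in> V) \<and>
     (\<forall>n::nat. \<forall>v\<in>V. n \<ge> 1 \<longrightarrow> (p ^^ n) v = v \<longrightarrow> p v = v)"

definition roots :: "'a set \<Rightarrow> ('a \<Rightarrow> 'a) \<Rightarrow> 'a set" where
  "roots V p = {v\<in>V. p v = v}"

text \<open>k-th children (meaningful for k >= 1).\<close>
definition chi :: "'a set \<Rightarrow> ('a \<Rightarrow> 'a) \<Rightarrow> nat \<Rightarrow> 'a \<Rightarrow> 'a set" where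
  "chi V p k v = {u\<in>V. (p ^^ k) u = v \<and> v \<noteq> (p ^^ (k - 1)) u}"

definition forest_edges :: "'a set \<Rightarrow> ('a \<Rightarrow> 'a) \<Rightarrow> ('a \<times> 'a) set" where
  "forest_edges V p = {(p u, u) | u. u \<in> V \<and> p u \<noteq> u} \<union> {(u, p u) | u. u \<in> V \<and> p u \<noteq> u}"

definition trees :: "'a set \<Rightarrow> ('a \<Rightarrow> 'a) \<Rightarrow> 'a set set" where
  "trees V p = {{w\<in>V. (u, w) \<in> (forest_edges V p)\<^sup>*} | u. u \<in> V}"

definition directed_tree :: "'a set \<Rightarrow> ('a \<Rightarrow> 'a) \<Rightarrow> bool" where
  "directed_tree V p \<longleftrightarrow> directed_forest V p \<and> (\<exists>!T. T \<in> trees V p)"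

definition thinner :: "'a set \<Rightarrow> ('a \<Rightarrow> 'a) \<Rightarrow> ('a \<Rightarrow> 'a) \<Rightarrow> bool" where
  "thinner V p1 p2 \<longleftrightarrow> (\<forall>v\<in>V. p1 v = v \<or> p1 v = p2 v)"

end

theory Submission
  imports Defs
begin

text \<open>Where p1 differs from p2 it fixes the vertex, so every p1-path is a p2-path: p1-edges are
  p2-edges (hence p1-trees lie inside p2-trees) and a vertex that p1 moves k times is moved
  identically by p2 (hence k-th children persist). Conversely, if p1 v differs from p2 v then
  v is a p1-root, and p2 v cannot lie in the p1-tree of v: its p1-ancestors, which are also
  p2-ancestors, would lead back to v and close a p2-cycle through p2 v. So the p2-tree of v
  contains the two distinct p1-trees of v and of p2 v.\<close>

lemma funpow_fixed: "p x = x \<Longrightarrow> (p ^^ n) x = x"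
  by (induction n) auto

lemma funpow_closed: "p ` V \<subseteq> V \<Longrightarrow> x \<in> V \<Longrightarrow> (p ^^ n) x \<in> V"
  by (induction n) auto

lemma directed_forest_closed: "directed_forest V p \<Longrightarrow> p ` V \<subseteq> V"
  unfolding directed_forest_def by blast

lemma directed_forest_funpow_fixed:
  "directed_forest V p \<Longrightarrow> v \<in> V \<Longrightarrow> (p ^^ Suc n) v = v \<Longrightarrow> p v = v"
  unfolding directed_forest_def by (metis le_add1 plus_1_eq_Suc)

lemma funpow_moves_before:
  assumes moves: "(p ^^ k) u \<noteq> (p ^^ (k - 1)) u" and "i < k"
  shows "p ((p ^^ i) u) \<noteq> (p ^^ i) u"
proof
  assume "p ((p ^^ i) u) = (p ^^ i) u"
  then have stable: "(p ^^ (l + i)) u = (p ^^ i) u" for l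
    by (simp add: funpow_add funpow_fixed)
  have "(p ^^ k) u = (p ^^ i) u" "(p ^^ (k - 1)) u = (p ^^ i) u"
    using stable[of "k - i"] stable[of "k - 1 - i"] \<open>i < k\<close> by simp_all
  with moves show False by simp
qed

lemma thinner_funpow_eq:
  assumes thin: "thinner V p1 p2" and closed: "p1 ` V \<subseteq> V" and "u \<in> V"
    and moves: "(p1 ^^ k) u \<noteq> (p1 ^^ (k - 1)) u" and "j \<le> k"
  shows "(p1 ^^ j) u = (p2 ^^ j) u"
  using \<open>j \<le> k\<close>
proof (induction j)
  case 0
  show ?case by simp
next
  case (Suc j)
  have "(p1 ^^ j) u \<in> V"
    using funpow_closed[OF closed \<open>u \<in> V\<close>] .
  moreover have "p1 ((p1 ^^ j) u) \<noteq> (p1 ^^ j) u"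
    using funpow_moves_before[OF moves] Suc.prems by simp
  ultimately have "p1 ((p1 ^^ j) u) = p2 ((p1 ^^ j) u)"
    using thin unfolding thinner_def by blast
  with Suc show ?case by simp
qed

lemma thinner_chi_subset:
  assumes "thinner V p1 p2" and "p1 ` V \<subseteq> V"
  shows "chi V p1 k v \<subseteq> chi V p2 k v"
proof
  fix u
  assume "u \<in> chi V p1 k v"
  then have "u \<in> V" and "(p1 ^^ k) u = v" and moves: "(p1 ^^ k) u \<noteq> (p1 ^^ (k - 1)) u"
    unfolding chi_def by auto
  moreover have "(p1 ^^ k) u = (p2 ^^ k) u" "(p1 ^^ (k - 1)) u = (p2 ^^ (k - 1)) u"
    using thinner_funpow_eq[OF assms \<open>u \<in> V\<close> moves] by simp_all
  ultimately show "u \<in> chi V p2 k v"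
    unfolding chi_def by simp
qed

lemma thinner_roots_subset: "thinner V p1 p2 \<Longrightarrow> roots V p2 \<subseteq> roots V p1"
  unfolding roots_def thinner_def by auto

definition tree_of :: "'a set \<Rightarrow> ('a \<Rightarrow> 'a) \<Rightarrow> 'a \<Rightarrow> 'a set" where
  "tree_of V p u = {w\<in>V. (u, w) \<in> (forest_edges V p)\<^sup>*}"

lemma trees_eq_image_tree_of: "trees V p = tree_of V p ` V"
  unfolding trees_def tree_of_def by auto

lemma tree_of_self: "u \<in> V \<Longrightarrow> u \<in> tree_of V p u"
  unfolding tree_of_def by simp

lemma sym_forest_edges: "sym (forest_edges V p)"
  unfolding forest_edges_def sym_def by blast

lemma tree_of_eq:
  assumes "w \<in> tree_of V p u"
  shows "tree_of V p w = tree_of V p u"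
proof -
  have "(u, w) \<in> (forest_edges V p)\<^sup>*"
    using assms unfolding tree_of_def by simp
  moreover from this have "(w, u) \<in> (forest_edges V p)\<^sup>*"
    by (rule symD[OF sym_rtrancl[OF sym_forest_edges]])
  ultimately show ?thesis
    unfolding tree_of_def by (meson rtrancl_trans)
qed

lemma trees_eq_tree_of:
  assumes "T \<in> trees V p" and "w \<in> T"
  shows "T = tree_of V p w"
proof -
  obtain u where "T = tree_of V p u"
    using \<open>T \<in> trees V p\<close> unfolding trees_eq_image_tree_of by blast
  with \<open>w \<in> T\<close> show ?thesis
    using tree_of_eq by metis
qed

lemma trees_subset_eq:
  assumes "T \<in> trees V p" and "T' \<in> trees V p" and "T' \<subseteq> T"
  shows "T' = T"
proof -
  obtain w where "w \<in> V" "T' = tree_of V p w"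
    using \<open>T' \<in> trees V p\<close> unfolding trees_eq_image_tree_of by blast
  with assms show ?thesis
    using tree_of_self trees_eq_tree_of by (metis subsetD)
qed

lemma parent_in_tree_of:
  assumes "v \<in> V" and "p v \<in> V"
  shows "p v \<in> tree_of V p v"
proof (cases "p v = v")
  case False
  then have "(v, p v) \<in> forest_edges V p"
    using \<open>v \<in> V\<close> unfolding forest_edges_def by blast
  with \<open>p v \<in> V\<close> show ?thesis
    unfolding tree_of_def by auto
qed (simp add: tree_of_self \<open>v \<in> V\<close>)

lemma thinner_forest_edges_subset:
  "thinner V p1 p2 \<Longrightarrow> forest_edges V p1 \<subseteq> forest_edges V p2"
  unfolding thinner_def forest_edges_def by force

lemma thinner_tree_of_subset: "thinner V p1 p2 \<Longrightarrow> tree_of V p1 u \<subseteq> tree_of V p2 u"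
  unfolding tree_of_def using rtrancl_mono[OF thinner_forest_edges_subset] by blast

lemma thinner_tree_of_subset_tree:
  "thinner V p1 p2 \<Longrightarrow> T \<in> trees V p2 \<Longrightarrow> w \<in> T \<Longrightarrow> tree_of V p1 w \<subseteq> T"
  using thinner_tree_of_subset[of V p1 p2 w] trees_eq_tree_of[of T V p2 w] by simp

lemma thinner_trees_refine:
  assumes "thinner V p1 p2" and "T1 \<in> trees V p1"
  shows "\<exists>T2\<in>trees V p2. T1 \<subseteq> T2"
proof -
  obtain u where "u \<in> V" "T1 = tree_of V p1 u"
    using \<open>T1 \<in> trees V p1\<close> unfolding trees_eq_image_tree_of by blast
  moreover have "tree_of V p2 u \<in> trees V p2"
    unfolding trees_eq_image_tree_of using \<open>u \<in> V\<close> by (rule imageI)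
  ultimately show ?thesis
    using thinner_tree_of_subset[OF \<open>thinner V p1 p2\<close>] by blast
qed

lemma thinner_trees_inj:
  assumes thin: "thinner V p1 p2"
  shows "\<exists>f. inj_on f (trees V p2) \<and> f ` trees V p2 \<subseteq> trees V p1"
proof -
  define pick where "pick T = (SOME w. w \<in> T)" for T :: "'a set"
  have pick: "pick T \<in> T" "pick T \<in> V" if T: "T \<in> trees V p2" for T
  proof -
    obtain u where "u \<in> V" "T = tree_of V p2 u"
      using T unfolding trees_eq_image_tree_of by blast
    then have "pick T \<in> T"
      unfolding pick_def using tree_of_self by (metis someI_ex)
    then show "pick T \<in> T" "pick T \<in> V"
      using \<open>T = tree_of V p2 u\<close> unfolding tree_of_def by auto
  qed
  have "inj_on (\<lambda>T. tree_of V p1 (pick T)) (trees V p2)"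
  proof (rule inj_onI)
    fix T T'
    assume T: "T \<in> trees V p2" and T': "T' \<in> trees V p2"
      and eq: "tree_of V p1 (pick T) = tree_of V p1 (pick T')"
    have "pick T \<in> T'"
      using thinner_tree_of_subset_tree[OF thin T' pick(1)[OF T']] eq tree_of_self[OF pick(2)[OF T]]
      by blast
    then show "T = T'"
      using trees_eq_tree_of[OF T pick(1)[OF T]] trees_eq_tree_of[OF T'] by simp
  qed
  moreover have "(\<lambda>T. tree_of V p1 (pick T)) ` trees V p2 \<subseteq> trees V p1"
    using pick(2) unfolding trees_eq_image_tree_of by auto
  ultimately show ?thesis by blast
qed

lemma forest_edges_rtrancl_common_ancestor:
  "(u, w) \<in> (forest_edges V p)\<^sup>* \<Longrightarrow> \<exists>m n. (p ^^ m) u = (p ^^ n) w"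
proof (induction rule: rtrancl_induct)
  case base
  show ?case by (metis funpow_0)
next
  case (step x w)
  then obtain m n where mn: "(p ^^ m) u = (p ^^ n) x" by blast
  from step.hyps(2) consider "x = p w" | "w = p x"
    unfolding forest_edges_def by blast
  then show ?case
  proof cases
    case 1
    then have "(p ^^ m) u = (p ^^ Suc n) w"
      using mn by (simp add: funpow_swap1)
    then show ?thesis by blast
  next
    case 2
    then have "(p ^^ Suc m) u = (p ^^ n) w"
      using mn by (simp add: funpow_swap1)
    then show ?thesis by blast
  qed
qed

lemma tree_of_root_reachable:
  assumes "p v = v" and "w \<in> tree_of V p v"
  shows "\<exists>m. (p ^^ m) w = v"
proof -
  have "(v, w) \<in> (forest_edges V p)\<^sup>*"
    using assms(2) unfolding tree_of_def by blast
  then obtain m n where "(p ^^ m) v = (p ^^ n) w"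
    using forest_edges_rtrancl_common_ancestor by metis
  with funpow_fixed[of p v m, OF \<open>p v = v\<close>] show ?thesis by metis
qed

lemma thinner_funpow_orbit:
  assumes thin: "thinner V p1 p2" and closed: "p2 ` V \<subseteq> V" and "w \<in> V"
  shows "\<exists>j. (p1 ^^ m) w = (p2 ^^ j) w"
proof (induction m)
  case 0
  show ?case by (metis funpow_0)
next
  case (Suc m)
  then obtain j where j: "(p1 ^^ m) w = (p2 ^^ j) w" by blast
  have "(p2 ^^ j) w \<in> V"
    using funpow_closed[OF closed \<open>w \<in> V\<close>] .
  then consider "p1 ((p2 ^^ j) w) = (p2 ^^ j) w" | "p1 ((p2 ^^ j) w) = (p2 ^^ Suc j) w"
    using thin unfolding thinner_def by auto
  then show ?case
    using j by cases (metis funpow.simps(2) o_apply)+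
qed

lemma thinner_parent_notin_tree_of:
  assumes forest: "directed_forest V p2" and thin: "thinner V p1 p2"
    and "v \<in> V" and differ: "p1 v \<noteq> p2 v"
  shows "p2 v \<notin> tree_of V p1 v"
proof
  assume "p2 v \<in> tree_of V p1 v"
  have root: "p1 v = v"
    using thin \<open>v \<in> V\<close> differ unfolding thinner_def by blast
  then obtain m where "(p1 ^^ m) (p2 v) = v"
    using tree_of_root_reachable[OF root \<open>p2 v \<in> tree_of V p1 v\<close>] by blast
  moreover have "p2 v \<in> V"
    using directed_forest_closed[OF forest] \<open>v \<in> V\<close> by blast
  then obtain j where "(p1 ^^ m) (p2 v) = (p2 ^^ j) (p2 v)"
    using thinner_funpow_orbit[OF thin directed_forest_closed[OF forest]] by metis
  ultimately have "(p2 ^^ Suc j) v = v"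
    by (simp add: funpow_swap1)
  then have "p2 v = v"
    by (rule directed_forest_funpow_fixed[OF forest \<open>v \<in> V\<close>])
  with root differ show False by simp
qed

lemma thinner_unique_subtree_imp_eq:
  assumes forest: "directed_forest V p2" and thin: "thinner V p1 p2"
    and unique: "\<forall>T2\<in>trees V p2. \<exists>!T1. T1 \<in> trees V p1 \<and> T1 \<subseteq> T2"
    and "v \<in> V"
  shows "p1 v = p2 v"
proof (rule ccontr)
  assume differ: "p1 v \<noteq> p2 v"
  have "p2 v \<in> V"
    using directed_forest_closed[OF forest] \<open>v \<in> V\<close> by blast
  define T2 where "T2 = tree_of V p2 v"
  have "T2 \<in> trees V p2"
    unfolding T2_def trees_eq_image_tree_of using \<open>v \<in> V\<close> by blast
  have "p2 v \<in> T2"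
    unfolding T2_def using parent_in_tree_of \<open>v \<in> V\<close> \<open>p2 v \<in> V\<close> .
  have "v \<in> T2"
    unfolding T2_def using tree_of_self \<open>v \<in> V\<close> .
  have "tree_of V p1 v \<in> trees V p1" "tree_of V p1 (p2 v) \<in> trees V p1"
    unfolding trees_eq_image_tree_of using \<open>v \<in> V\<close> \<open>p2 v \<in> V\<close> by blast+
  moreover have "tree_of V p1 v \<subseteq> T2" "tree_of V p1 (p2 v) \<subseteq> T2"
    using thinner_tree_of_subset_tree[OF thin \<open>T2 \<in> trees V p2\<close>] \<open>v \<in> T2\<close> \<open>p2 v \<in> T2\<close>
    by blast+
  moreover have "tree_of V p1 v \<noteq> tree_of V p1 (p2 v)"
    using thinner_parent_notin_tree_of[OF forest thin \<open>v \<in> V\<close> differ]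
      tree_of_self[OF \<open>p2 v \<in> V\<close>] by auto
  ultimately show False
    using unique \<open>T2 \<in> trees V p2\<close> by blast
qed

lemma eq_imp_unique_subtree:
  assumes "\<forall>v\<in>V. p1 v = p2 v"
  shows "\<forall>T2\<in>trees V p2. \<exists>!T1. T1 \<in> trees V p1 \<and> T1 \<subseteq> T2"
proof -
  have "thinner V p1 p2" "thinner V p2 p1"
    using assms unfolding thinner_def by simp_all
  then have "forest_edges V p1 = forest_edges V p2"
    using thinner_forest_edges_subset by blast
  then have "trees V p1 = trees V p2"
    unfolding trees_def by simp
  then show ?thesis
    using trees_subset_eq by blast
qed

lemma thinner_unique_subtree_iff:
  assumes "directed_forest V p2" and "thinner V p1 p2"
  shows "(\<forall>T2\<in>trees V p2. \<exists>!T1. T1 \<in> trees V p1 \<and> T1 \<subseteq> T2) \<longleftrightarrow> (\<forall>v\<in>V. p1 v = p2 v)"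
proof
  assume "\<forall>T2\<in>trees V p2. \<exists>!T1. T1 \<in> trees V p1 \<and> T1 \<subseteq> T2"
  then show "\<forall>v\<in>V. p1 v = p2 v"
    using thinner_unique_subtree_imp_eq[OF assms] by blast
qed (rule eq_imp_unique_subtree)

lemma strictly_thinner_not_directed_tree:
  assumes forest: "directed_forest V p2" and thin: "thinner V p1 p2"
    and "directed_tree V p2" and "\<exists>v\<in>V. p1 v \<noteq> p2 v"
  shows "\<not> directed_tree V p1"
proof
  assume "directed_tree V p1"
  then obtain T1 where T1: "trees V p1 = {T1}"
    unfolding directed_tree_def by blast
  obtain T2 where T2: "trees V p2 = {T2}"
    using \<open>directed_tree V p2\<close> unfolding directed_tree_def by blast
  have "\<exists>T\<in>trees V p2. T1 \<subseteq> T"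
    using thinner_trees_refine[OF thin] T1 by simp
  with T1 T2 have "\<forall>T2\<in>trees V p2. \<exists>!T1. T1 \<in> trees V p1 \<and> T1 \<subseteq> T2"
    by auto
  then have "\<forall>v\<in>V. p1 v = p2 v"
    using thinner_unique_subtree_iff[OF forest thin] by simp
  with \<open>\<exists>v\<in>V. p1 v \<noteq> p2 v\<close> show False
    by simp
qed

theorem lemma3p6:
  fixes V :: "'a set" and p1 p2 :: "'a \<Rightarrow> 'a"
  assumes F1: "directed_forest V p1" and F2: "directed_forest V p2"
    and TH: "thinner V p1 p2"
  shows "(\<forall>v\<in>V. \<forall>k::nat. k \<ge> 1 \<longrightarrow> chi V p1 k v \<subseteq> chi V p2 k v)
    \<and> roots V p2 \<subseteq> roots V p1
    \<and> (\<forall>T1\<in>trees V p1. \<exists>T2\<in>trees V p2. T1 \<subseteq> T2)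
    \<and> (\<exists>f. inj_on f (trees V p2) \<and> f ` trees V p2 \<subseteq> trees V p1)
    \<and> ((\<forall>T2\<in>trees V p2. \<exists>!T1. T1 \<in> trees V p1 \<and> T1 \<subseteq> T2) \<longleftrightarrow> (\<forall>v\<in>V. p1 v = p2 v))
    \<and> (directed_tree V p2 \<and> (\<exists>v\<in>V. p1 v \<noteq> p2 v) \<longrightarrow> \<not> directed_tree V p1)"
  by (intro conjI ballI allI impI thinner_chi_subset[OF TH directed_forest_closed[OF F1]]
      thinner_roots_subset[OF TH] thinner_trees_refine[OF TH] thinner_trees_inj[OF TH]
      thinner_unique_subtree_iff[OF F2 TH] strictly_thinner_not_directed_tree[OF F2 TH])
    simp_all

end
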